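(* Let $\Lambda$ be a complex $m\times N$ matrix and let $\pi$ be an $N\times N$ real diagonal matrix with strictly positive diagonal entries. Let $\Gamma_{mp}$ be the Moore–Penrose inverse of $\Lambda$, let $M:=\Gamma_{mp}\Lambda$ (so $M=M^\dagger=M^2$), and define $$\Gamma_{opt}:=\Gamma_{mp}-\big[(I-M)\pi(I-M)\big]^{\ddagger}\,\pi M\,\Gamma_{mp},$$ where $X^{\ddagger}$ denotes the Moore–Penrose inverse of $X$ and $I$ is the $N\times N$ identity. Then $\Gamma_{opt}$ is a minimum norm g-inverse of $\Lambda$ with respect to $\pi$, i.e. $\Lambda\Gamma_{opt}\Lambda=\Lambda$ and $\pi\Gamma_{opt}\Lambda=\Lambda^\dagger\Gamma_{opt}^\dagger\pi$.
   Context: $\dagger$ denotes the conjugate transpose. The Moore–Penrose inverse $\Gamma_{mp}$ of $\Lambda$ is the unique $N\times m$ matrix satisfying $\Lambda\Gamma_{mp}\Lambda=\Lambda$, $\Gamma_{mp}\Lambda\Gamma_{mp}=\Gamma_{mp}$, $(\Gamma_{mp}\Lambda)^\dagger=\Gamma_{mp}\Lambda$, $(\Lambda\Gamma_{mp})^\dagger=\Lambda\Gamma_{mp}$. A g-inverse of $\Lambda$ is any $N\times m$ matrix $\Gamma$ with $\Lambda\Gamma\Lambda=\Lambda$. *)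

theory Defs
  imports "HOL-Analysis.Analysis"
begin

definition cadj :: "complex ^'n ^'m \<Rightarrow> complex ^'m ^'n" where
  "cadj A = (\<chi> i j. cnj (A $ j $ i))"

definition is_mp_inverse :: "complex ^'n ^'m \<Rightarrow> complex ^'m ^'n \<Rightarrow> bool" where
  "is_mp_inverse A G \<longleftrightarrow>
     A ** G ** A = A \<and> G ** A ** G = G \<and>
     cadj (G ** A) = G ** A \<and> cadj (A ** G) = A ** G"

definition mp_inverse :: "complex ^'n ^'m \<Rightarrow> complex ^'m ^'n" where
  "mp_inverse A = (THE G. is_mp_inverse A G)"

end

theory Submission
  imports Defs
begin

(* Write G for the Moore--Penrose inverse of \<Lambda>, M = G \<Lambda> (the orthogonal projection onto
   the row space of \<Lambda>), P = I - M, and Y = (P \<pi> P)^+.  The heart of the argument is that,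
   because \<pi> is a positive diagonal weight, Y is a genuine inverse of \<pi> on the range of P:
   P Y = Y and Y \<pi> P = P.  From this one computes  Gopt \<Lambda> = I - Y \<pi>,  so that
   \<Lambda> Gopt \<Lambda> = \<Lambda> (as \<Lambda> Y = \<Lambda> P Y = 0) and \<pi> Gopt \<Lambda> = \<pi> - \<pi> Y \<pi> is Hermitian,
   which is exactly the minimum norm condition. *)

lemma cadj_nth [simp]: "cadj A $ i $ j = cnj (A $ j $ i)"
  by (simp add: cadj_def)

lemma cadj_cadj [simp]: "cadj (cadj A) = A"
  by (simp add: vec_eq_iff)

lemma cadj_mult: "cadj (A ** B) = cadj B ** cadj A"
  by (simp add: vec_eq_iff matrix_matrix_mult_def mult.commute)

lemma cadj_add: "cadj (A + B) = cadj A + cadj B"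
  by (simp add: vec_eq_iff)

lemma cadj_diff: "cadj (A - B) = cadj A - cadj B"
  by (simp add: vec_eq_iff)

lemma cadj_zero [simp]: "cadj 0 = 0"
  by (simp add: vec_eq_iff)

lemma cadj_mat1 [simp]: "cadj (mat 1) = mat 1"
  by (simp add: vec_eq_iff mat_def)

lemma cadj_scaleR: "cadj (c *\<^sub>R A) = c *\<^sub>R cadj A"
  by (simp add: vec_eq_iff)

lemma matrix_add_rdistrib: "(B + C) ** A = B ** A + C ** A"
  by (simp add: vec_eq_iff matrix_matrix_mult_def sum.distrib distrib_right)

lemma matrix_diff_ldistrib: "A ** (B - C) = A ** B - A ** (C :: 'a::ring_1^_^_)"
  by (simp add: vec_eq_iff matrix_matrix_mult_def sum_subtractf right_diff_distrib)

lemma matrix_diff_rdistrib: "(B - C) ** A = B ** A - C ** (A :: 'a::ring_1^_^_)"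
  by (simp add: vec_eq_iff matrix_matrix_mult_def sum_subtractf left_diff_distrib)

definition positive_diagonal :: "complex^'n^'n \<Rightarrow> bool" where
  "positive_diagonal \<pi> \<longleftrightarrow>
     (\<forall>i j. i \<noteq> j \<longrightarrow> \<pi> $ i $ j = 0) \<and> (\<forall>i. \<pi> $ i $ i \<in> \<real> \<and> Re (\<pi> $ i $ i) > 0)"

lemma positive_diagonal_mat1: "positive_diagonal (mat 1)"
  by (simp add: positive_diagonal_def mat_def)

lemma positive_diagonal_hermitian:
  assumes "positive_diagonal \<pi>" shows "cadj \<pi> = \<pi>"
proof -
  have "cnj (\<pi> $ j $ i) = \<pi> $ i $ j" for i j
    using assms by (cases "i = j") (auto simp: positive_diagonal_def Reals_cnj_iff)
  thus ?thesis by (simp add: vec_eq_iff)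
qed

lemma positive_diagonal_form_diag:
  assumes "positive_diagonal \<pi>"
  shows "(cadj Z ** \<pi> ** Z) $ j $ j
           = of_real (\<Sum>k\<in>UNIV. Re (\<pi> $ k $ k) * (cmod (Z $ k $ j))\<^sup>2)"
proof -
  have diag: "\<pi> $ k $ l = 0" if "k \<noteq> l" for k l
    using assms that by (simp add: positive_diagonal_def)
  have row: "(cadj Z ** \<pi>) $ j $ k = cnj (Z $ k $ j) * \<pi> $ k $ k" for k
    unfolding matrix_matrix_mult_def using diag by (simp add: sum.remove[of UNIV k])
  have summand: "cnj (Z $ k $ j) * \<pi> $ k $ k * Z $ k $ j
                = of_real (Re (\<pi> $ k $ k) * (cmod (Z $ k $ j))\<^sup>2)" for k
  proof -
    obtain r where r: "\<pi> $ k $ k = of_real r"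
      using assms by (metis Reals_cases positive_diagonal_def)
    show ?thesis using complex_norm_square[of "Z $ k $ j"] by (simp add: r mult_ac)
  qed
  show ?thesis
    by (simp add: matrix_matrix_mult_def[of "cadj Z ** \<pi>"] row summand del: of_real_sum)
       (simp add: matrix_matrix_mult_def)
qed

lemma positive_diagonal_form_zero:
  assumes \<pi>: "positive_diagonal \<pi>" and zero: "cadj Z ** \<pi> ** Z = 0"
  shows "Z = 0"
proof -
  have pos: "Re (\<pi> $ k $ k) > 0" for k
    using \<pi> by (simp add: positive_diagonal_def)
  have "Z $ k $ j = 0" for k j
  proof -
    have "of_real (\<Sum>k\<in>UNIV. Re (\<pi> $ k $ k) * (cmod (Z $ k $ j))\<^sup>2) = (0 :: complex)"
      using positive_diagonal_form_diag[OF \<pi>, of Z j] zero by (simp only: zero_index)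
    hence "(\<Sum>k\<in>UNIV. Re (\<pi> $ k $ k) * (cmod (Z $ k $ j))\<^sup>2) = 0"
      by (simp only: of_real_eq_0_iff)
    moreover have "\<forall>k. 0 \<le> Re (\<pi> $ k $ k) * (cmod (Z $ k $ j))\<^sup>2"
      using pos by (simp add: less_imp_le)
    ultimately have "Re (\<pi> $ k $ k) * (cmod (Z $ k $ j))\<^sup>2 = 0"
      by (simp add: sum_nonneg_eq_0_iff)
    thus ?thesis using pos[of k] by simp
  qed
  thus ?thesis by (simp add: vec_eq_iff)
qed

lemma cadj_self_zero: "cadj Z ** Z = 0 \<Longrightarrow> Z = 0"
  using positive_diagonal_form_zero[OF positive_diagonal_mat1, of Z] by simp

(* Hermitian matrices can be cancelled from the left in B B W = 0, since
   (B W)^* (B W) = W^* B B W. *)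
lemma hermitian_square_cancel:
  assumes "cadj B = B" "B ** B ** W = 0" shows "B ** W = 0"
proof (rule cadj_self_zero)
  show "cadj (B ** W) ** (B ** W) = 0"
    using assms by (simp add: cadj_mult) (metis matrix_mul_assoc times0_right)
qed

fun mpow :: "complex^'n^'n \<Rightarrow> nat \<Rightarrow> complex^'n^'n" where
  "mpow B 0 = mat 1"
| "mpow B (Suc k) = B ** mpow B k"

lemma mpow_add: "mpow B (i + j) = mpow B i ** mpow B j"
  by (induction i) (simp_all add: matrix_mul_assoc)

lemma mpow_commute: "B ** mpow B k = mpow B k ** B"
  by (induction k) (simp_all, metis matrix_mul_assoc)

lemma mpow_hermitian: "cadj B = B \<Longrightarrow> cadj (mpow B k) = mpow B k"
  by (induction k) (simp_all add: cadj_mult mpow_commute)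

lemma hermitian_power_cancel:
  assumes "cadj B = B" shows "mpow B (Suc j) ** Z = 0 \<Longrightarrow> B ** Z = 0"
proof (induction j arbitrary: Z)
  case (Suc j)
  have "B ** (mpow B j ** Z) = 0"
    by (rule hermitian_square_cancel[OF assms]) (use Suc.prems in \<open>simp add: matrix_mul_assoc\<close>)
  hence "mpow B (Suc j) ** Z = 0" by (simp add: matrix_mul_assoc)
  thus ?case by (rule Suc.IH)
qed simp

lemma nonincreasing_nat_stalls:
  fixes d :: "nat \<Rightarrow> nat"
  assumes "\<And>k. d (Suc k) \<le> d k"
  shows "\<exists>k. d k \<le> d (Suc k)"
proof (rule ccontr)
  assume "\<not> ?thesis"
  hence lt: "d (Suc k) < d k" for k by (meson not_le)
  have "d k + k \<le> d 0" for k
  proof (induction k)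
    case (Suc k)
    with lt[of k] show ?case by simp
  qed simp
  from this[of "Suc (d 0)"] show False by simp
qed

(* The tail spaces span{B^(k+j) | j} form a decreasing chain, so at some k the k-th
   power is a linear combination of higher powers. *)
lemma power_in_span_of_higher_powers:
  "\<exists>k. mpow B k \<in> span (range (\<lambda>j. mpow B (Suc k + j)))"
proof -
  define tail where "tail k = range (\<lambda>j. mpow B (k + j))" for k
  have sub: "tail (Suc k) \<subseteq> tail k" for k
    unfolding tail_def by (rule image_subsetI) (metis add_Suc_shift rangeI)
  obtain k where "dim (tail k) \<le> dim (tail (Suc k))"
    using nonincreasing_nat_stalls[of "\<lambda>k. dim (tail k)"] dim_subset[OF sub] by blast
  hence "span (tail (Suc k)) = span (tail k)" by (rule dim_eq_span[OF sub])
  moreover have "mpow B k \<in> span (tail k)"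
    by (rule span_base) (auto simp: tail_def image_iff intro: exI[of _ 0])
  ultimately have "mpow B k \<in> span (tail (Suc k))" by simp
  thus ?thesis unfolding tail_def by blast
qed

(* For Hermitian B, every linear combination of the powers B^(n+j) has the form B^n T with
   T Hermitian and commuting with B (T is a real linear combination of powers of B). *)
lemma span_of_powers_factor:
  assumes cB: "cadj B = B"
  shows "span (range (\<lambda>j. mpow B (n + j)))
           \<subseteq> {mpow B n ** T | T. cadj T = T \<and> T ** B = B ** T}"
    (is "_ \<subseteq> ?S")
proof (rule span_minimal)
  show "range (\<lambda>j. mpow B (n + j)) \<subseteq> ?S"
  proof
    fix Y assume "Y \<in> range (\<lambda>j. mpow B (n + j))"
    then obtain j where "Y = mpow B n ** mpow B j" by (auto simp: mpow_add)
    thus "Y \<in> ?S" using mpow_hermitian[OF cB, of j] mpow_commute[of B j] by auto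
  qed
  show "subspace ?S"
    unfolding subspace_def
  proof (intro conjI ballI allI)
    show "0 \<in> ?S" by (auto intro!: exI[of _ 0])
  next
    fix x y assume "x \<in> ?S" "y \<in> ?S"
    then obtain T1 T2 where "cadj T1 = T1" "T1 ** B = B ** T1" "x = mpow B n ** T1"
      "cadj T2 = T2" "T2 ** B = B ** T2" "y = mpow B n ** T2" by blast
    thus "x + y \<in> ?S"
      by (intro CollectI exI[of _ "T1 + T2"])
         (simp add: cadj_add matrix_add_ldistrib matrix_add_rdistrib)
  next
    fix c :: real and x assume "x \<in> ?S"
    then obtain T where "cadj T = T" "T ** B = B ** T" "x = mpow B n ** T" by blast
    thus "c *\<^sub>R x \<in> ?S"
      by (intro CollectI exI[of _ "c *\<^sub>R T"])
         (simp add: cadj_scaleR matrix_scalar_ac scalar_matrix_assoc[symmetric])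
  qed
qed

(* From B^k = B^(k+1) T one gets B^(k+1) (I - B T) = 0, and the
   cancellation lemma removes all but one factor B. *)
lemma hermitian_regular_inverse:
  assumes cB: "cadj B = B"
  shows "\<exists>T. cadj T = T \<and> T ** B = B ** T \<and> B = B ** B ** T"
proof -
  obtain k where "mpow B k \<in> span (range (\<lambda>j. mpow B (Suc k + j)))"
    using power_in_span_of_higher_powers by blast
  then obtain T where T: "cadj T = T" "T ** B = B ** T" "mpow B k = mpow B (Suc k) ** T"
    using span_of_powers_factor[OF cB, of "Suc k"] by blast
  have "mpow B (Suc k) = B ** (mpow B (Suc k) ** T)"
    using T(3) by simp
  also have "\<dots> = mpow B (Suc k) ** (B ** T)"
    by (simp add: matrix_mul_assoc mpow_commute)
  finally have "mpow B (Suc k) ** (mat 1 - B ** T) = 0"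
    by (simp add: matrix_diff_ldistrib)
  hence "B ** (mat 1 - B ** T) = 0" by (rule hermitian_power_cancel[OF cB])
  hence "B = B ** B ** T" by (simp add: matrix_diff_ldistrib matrix_mul_assoc)
  thus ?thesis using T by blast
qed

(* Existence of the Moore--Penrose inverse: with B = A^* A and T as above,
   X = T A^* satisfies the four Penrose conditions. *)
lemma mp_inverse_exists: "\<exists>G. is_mp_inverse (A :: complex^'n^'m) G"
proof -
  define B where "B = cadj A ** A"
  have cB: "cadj B = B" by (simp add: B_def cadj_mult)
  obtain T where cT: "cadj T = T" and TB: "T ** B = B ** T" and BT: "B = B ** B ** T"
    using hermitian_regular_inverse[OF cB] by blast
  define X where "X = T ** cadj A"
  define D where "D = A ** T ** B - A"
  have BTB: "B ** T ** B = B"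
    using TB BT by (metis matrix_mul_assoc)
  have AD: "cadj A ** D = 0"
    using BTB by (simp add: D_def B_def matrix_diff_ldistrib matrix_mul_assoc)
  have "cadj D ** D = B ** T ** (cadj A ** D) - cadj A ** D"
    using cB cT by (simp add: D_def cadj_diff cadj_mult matrix_diff_rdistrib matrix_mul_assoc)
  hence "D = 0" using AD cadj_self_zero by simp
  hence AXA: "A ** X ** A = A" by (simp add: D_def X_def B_def matrix_mul_assoc)
  have XA: "cadj (X ** A) = X ** A"
    using cB cT TB by (simp add: X_def B_def cadj_mult matrix_mul_assoc[symmetric])
  have AX: "cadj (A ** X) = A ** X"
    using cT by (simp add: X_def cadj_mult matrix_mul_assoc)
  have "cadj A ** (A ** X) = cadj (A ** X ** A)"
    using AX by (metis cadj_mult)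
  hence "X ** A ** X = X"
    using AXA by (simp add: X_def matrix_mul_assoc[symmetric])
  thus ?thesis using AXA XA AX unfolding is_mp_inverse_def by blast
qed

(* Uniqueness: the classical computation G1 = G1 A G2 = G2. *)
lemma mp_inverse_unique:
  assumes 1: "is_mp_inverse A G1" and 2: "is_mp_inverse A G2"
  shows "G1 = G2"
proof -
  from 1 have a1: "A ** G1 ** A = A" and g1: "G1 ** A ** G1 = G1"
    and h1: "cadj (G1 ** A) = G1 ** A" and k1: "cadj (A ** G1) = A ** G1"
    by (auto simp: is_mp_inverse_def)
  from 2 have a2: "A ** G2 ** A = A" and g2: "G2 ** A ** G2 = G2"
    and h2: "cadj (G2 ** A) = G2 ** A" and k2: "cadj (A ** G2) = A ** G2"
    by (auto simp: is_mp_inverse_def)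
  have cA2: "cadj A = cadj A ** cadj G2 ** cadj A"
    using arg_cong[OF a2, of cadj] by (simp add: cadj_mult matrix_mul_assoc)
  have cA1: "cadj A = cadj A ** cadj G1 ** cadj A"
    using arg_cong[OF a1, of cadj] by (simp add: cadj_mult matrix_mul_assoc)
  have "G1 = G1 ** cadj G1 ** cadj A"
    using g1 k1 by (metis cadj_mult matrix_mul_assoc)
  also have "\<dots> = G1 ** cadj (A ** G1) ** cadj (A ** G2)"
    by (subst cA2) (simp add: cadj_mult matrix_mul_assoc)
  also have "\<dots> = G1 ** A ** G2"
    using k1 k2 g1 by (simp add: matrix_mul_assoc)
  finally have e1: "G1 = G1 ** A ** G2" .
  have "G2 = cadj A ** cadj G2 ** G2"
    using g2 h2 by (metis cadj_mult)
  also have "\<dots> = cadj (G1 ** A) ** cadj (G2 ** A) ** G2"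
    by (subst cA1) (simp add: cadj_mult matrix_mul_assoc)
  also have "\<dots> = G1 ** A ** G2"
    using h1 h2 g2 by (simp add: matrix_mul_assoc) (metis matrix_mul_assoc)
  finally show ?thesis using e1 by simp
qed

lemma mp_inverse_penrose: "is_mp_inverse A (mp_inverse A)"
  unfolding mp_inverse_def using mp_inverse_exists mp_inverse_unique by (metis theI)

(* The Moore--Penrose inverse of a Hermitian matrix is Hermitian: the Penrose
   conditions are invariant under conjugate transposition. *)
lemma mp_inverse_hermitian:
  assumes "cadj A = A" shows "cadj (mp_inverse A) = mp_inverse A"
proof -
  have Y: "is_mp_inverse A (mp_inverse A)" by (rule mp_inverse_penrose)
  hence "is_mp_inverse A (cadj (mp_inverse A))"
    using assms unfolding is_mp_inverse_def by (metis cadj_mult cadj_cadj matrix_mul_assoc)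
  thus ?thesis using Y mp_inverse_unique by blast
qed

lemma mp_row_projection:
  fixes A :: "complex^'n^'m"
  defines "P \<equiv> mat 1 - mp_inverse A ** A"
  shows "cadj P = P" and "P ** P = P" and "A ** P = 0"
proof -
  define G where "G = mp_inverse A"
  have G: "A ** G ** A = A" "G ** A ** G = G" "cadj (G ** A) = G ** A"
    using mp_inverse_penrose[of A] by (auto simp: G_def is_mp_inverse_def)
  show "cadj P = P" using G(3) by (simp add: P_def G_def[symmetric] cadj_diff)
  show "P ** P = P"
    using G(2) by (simp add: P_def G_def[symmetric] matrix_diff_ldistrib matrix_diff_rdistrib
        matrix_mul_assoc)
  show "A ** P = 0"
    using G(1) by (simp add: P_def G_def[symmetric] matrix_diff_ldistrib matrix_mul_assoc)
qed

(* The weighted inverse on the range of an orthogonal projection P: for positive diagonal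
   \<pi>, Y = (P \<pi> P)^+ is Hermitian, lives in the range of P, and inverts \<pi> there,
   i.e. Y \<pi> P = P.  The last fact uses definiteness of \<pi>: with Q = I - Y X the matrix
   P Q has weighted Gram matrix Q^* X Q = 0. *)
lemma compressed_weight_inverse:
  assumes \<pi>: "positive_diagonal \<pi>" and cP: "cadj P = P" and PP: "P ** P = P"
  defines "Y \<equiv> mp_inverse (P ** \<pi> ** P)"
  shows "cadj Y = Y" and "P ** Y = Y" and "Y ** \<pi> ** P = P"
proof -
  define X where "X = P ** \<pi> ** P"
  have cX: "cadj X = X"
    using cP positive_diagonal_hermitian[OF \<pi>] by (simp add: X_def cadj_mult matrix_mul_assoc)
  show cY: "cadj Y = Y" using mp_inverse_hermitian[OF cX] by (simp add: Y_def X_def)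
  have Y1: "Y ** X ** Y = Y" and Y3: "cadj (Y ** X) = Y ** X" and X1: "X ** Y ** X = X"
    using mp_inverse_penrose[of X] by (auto simp: is_mp_inverse_def Y_def X_def)
  have Y_eq: "Y = P ** (\<pi> ** P ** Y ** Y)"
    using Y1 Y3 cX cY by (metis X_def cadj_mult matrix_mul_assoc)
  hence "P ** Y = (P ** P) ** (\<pi> ** P ** Y ** Y)" by (metis matrix_mul_assoc)
  thus PY: "P ** Y = Y" using PP Y_eq by simp
  have YP: "Y ** P = Y" using arg_cong[OF PY, of cadj] cP cY by (simp add: cadj_mult)
  define Q where "Q = mat 1 - Y ** X"
  have "X ** Q = 0" using X1 by (simp add: Q_def matrix_diff_ldistrib matrix_mul_assoc)
  moreover have "cadj (P ** Q) ** \<pi> ** (P ** Q) = cadj Q ** (X ** Q)"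
    using cP by (simp add: cadj_mult X_def matrix_mul_assoc)
  ultimately have "P ** Q = 0" using positive_diagonal_form_zero[OF \<pi>] by simp
  hence "P = P ** Y ** X" by (simp add: Q_def matrix_diff_ldistrib matrix_mul_assoc)
  also have "\<dots> = Y ** \<pi> ** P" using PY YP by (simp add: X_def matrix_mul_assoc)
  finally show "Y ** \<pi> ** P = P" by simp
qed

lemma corrected_inverse_product:
  fixes G :: "complex^'m^'n" and \<Lambda> :: "complex^'n^'m" and M Y \<pi> :: "complex^'n^'n"
  assumes GL: "G ** \<Lambda> = M" and MM: "M ** M = M" and Y: "Y ** \<pi> ** (mat 1 - M) = mat 1 - M"
  shows "(G - Y ** \<pi> ** M ** G) ** \<Lambda> = mat 1 - Y ** \<pi>"
proof -
  have Y_expanded: "Y ** \<pi> - Y ** \<pi> ** M = mat 1 - M"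
    using Y by (simp add: matrix_diff_ldistrib)
  have YM: "Y ** \<pi> ** M = Y ** \<pi> - (mat 1 - M)"
    by (simp flip: Y_expanded)
  have "(G - Y ** \<pi> ** M ** G) ** \<Lambda> = G ** \<Lambda> - Y ** \<pi> ** M ** G ** \<Lambda>"
    by (rule matrix_diff_rdistrib)
  also have "\<dots> = M - Y ** \<pi> ** M"
    using GL MM by (simp add: matrix_mul_assoc[symmetric])
  also have "\<dots> = mat 1 - Y ** \<pi>"
    using YM by simp
  finally show ?thesis .
qed

theorem mainTheorem2:
  fixes \<Lambda> :: "complex ^'N ^'m" and \<pi> :: "complex ^'N ^'N"
  assumes diag: "\<forall>i j. i \<noteq> j \<longrightarrow> \<pi> $ i $ j = 0"
    and pos: "\<forall>i. \<pi> $ i $ i \<in> \<real> \<and> Re (\<pi> $ i $ i) > 0"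
  shows "let Gmp = mp_inverse \<Lambda>; M = Gmp ** \<Lambda>;
             Gopt = Gmp - mp_inverse ((mat 1 - M) ** \<pi> ** (mat 1 - M)) ** \<pi> ** M ** Gmp
         in \<Lambda> ** Gopt ** \<Lambda> = \<Lambda> \<and> \<pi> ** Gopt ** \<Lambda> = cadj \<Lambda> ** cadj Gopt ** \<pi>"
proof -
  define G where "G = mp_inverse \<Lambda>"
  define M where "M = G ** \<Lambda>"
  define Y where "Y = mp_inverse ((mat 1 - M) ** \<pi> ** (mat 1 - M))"
  define Gopt where "Gopt = G - Y ** \<pi> ** M ** G"
  have \<pi>: "positive_diagonal \<pi>" using diag pos by (simp add: positive_diagonal_def)
  note P = mp_row_projection[of \<Lambda>, folded G_def, folded M_def]
  have MM: "M ** M = M"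
    using mp_inverse_penrose[of \<Lambda>] by (simp add: M_def G_def is_mp_inverse_def matrix_mul_assoc)
  note Yprops = compressed_weight_inverse[OF \<pi> P(1,2), folded Y_def]
  have GoptL: "Gopt ** \<Lambda> = mat 1 - Y ** \<pi>"
    using corrected_inverse_product[OF M_def[symmetric] MM Yprops(3)] by (simp add: Gopt_def)
  have "\<Lambda> ** Y = (\<Lambda> ** (mat 1 - M)) ** Y" using Yprops(2) by (simp add: matrix_mul_assoc[symmetric])
  hence LY: "\<Lambda> ** Y = 0" using P(3) by simp
  have "\<Lambda> ** Gopt ** \<Lambda> = \<Lambda> ** (mat 1 - Y ** \<pi>)"
    by (simp add: GoptL matrix_mul_assoc[symmetric])
  also have "\<dots> = \<Lambda>" using LY by (simp add: matrix_diff_ldistrib matrix_mul_assoc)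
  finally have ginv: "\<Lambda> ** Gopt ** \<Lambda> = \<Lambda>" .
  have "\<pi> ** Gopt ** \<Lambda> = \<pi> - \<pi> ** Y ** \<pi>"
    by (simp add: GoptL matrix_mul_assoc[symmetric] matrix_diff_ldistrib)
  moreover have "cadj (\<pi> - \<pi> ** Y ** \<pi>) = \<pi> - \<pi> ** Y ** \<pi>"
    using positive_diagonal_hermitian[OF \<pi>] Yprops(1)
    by (simp add: cadj_diff cadj_mult matrix_mul_assoc)
  moreover have "cadj \<Lambda> ** cadj Gopt ** \<pi> = cadj (\<pi> ** Gopt ** \<Lambda>)"
    using positive_diagonal_hermitian[OF \<pi>] by (simp add: cadj_mult matrix_mul_assoc)
  ultimately have "\<pi> ** Gopt ** \<Lambda> = cadj \<Lambda> ** cadj Gopt ** \<pi>"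
    by simp
  thus ?thesis using ginv
    by (simp only: Let_def G_def[symmetric] M_def[symmetric] Y_def[symmetric] Gopt_def[symmetric])
qed

end
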